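(* Let $C$ be a finite-dimensional graded vector space with an $A_\infty$ coalgebra structure $\{\triangle_n\}$ and a nondegenerate symmetric bilinear form $\langle-,-\rangle$ of degree $-d$, and let $A=C^*=\mathrm{Hom}_k(C,k)$ with the dual $A_\infty$ algebra structure $\{\mu_n\}$ and the form transported along the isomorphism $C\to A$, $a\mapsto a^*=\langle-,a\rangle$. Then $C$ is a cyclic $A_\infty$ coalgebra if and only if $A$ is a cyclic $A_\infty$ algebra.
   Context: An $A_\infty$ coalgebra structure on a graded vector space $C$ is a sequence $\triangle_n:C\to C^{\otimes n}$ of degree $n-2$ with $\sum_{r+s+t=n}(-1)^{r+st}(\mathrm{id}^{\otimes r}\otimes\triangle_s\otimes\mathrm{id}^{\otimes t})\triangle_{r+1+t}=0$; an $A_\infty$ algebra structure on $A$ is $\mu_n:A^{\otimes n}\to A$ of degree $n-2$ with $\sum_{r+s+t=n}(-1)^{r+st}\mu_{r+1+t}(\mathrm{id}^{\otimes r}\otimes\mu_s\otimes\mathrm{id}^{\otimes t})=0$; the dual structure is $\mu_r(x_1,\dots,x_r)(a)=(x_1,\dots,x_r)(\triangle_r(a))$. A symmetric bilinear form of degree $-d$ is $\langle-,-\rangle:V\otimes V\to k[d]$ with $\langle v,w\rangle=(-1)^{|v||w|}\langle w,v\rangle$. $C$ is cyclic (of degree $-d$) if for all $a,b\in C$ and all $r$, writing $\triangle_r(a)=a^1\cdots a^r$, $\triangle_r(b)=b^1\cdots b^r$: $\langle a,b^1\rangle\, b^2\cdots b^r=(-1)^{r+|b^1|(|a|+r)}\langle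 b,a^r\rangle\, a^1\cdots a^{r-1}\in C^{\otimes(r-1)}$. $A$ is cyclic if $\langle\mu_n(a_1,\dots,a_n),a_{n+1}\rangle=(-1)^{n+|a_{n+1}|(|a_1|+\cdots+|a_n|)}\langle\mu_n(a_{n+1},a_1,\dots,a_{n-1}),a_n\rangle$ for all $n$ and all $a_i$. *)

theory Defs
  imports Main
begin

text \<open>The finite-dimensional graded vector space C over the field 'k
is k^I for a finite index type 'i of a homogeneous basis; basis vector e_x has degree deg x.
Elements of C are coefficient functions 'i => 'k; elements of C^{tensor n} are coefficient
functions on index lists of length n.  The dual A = Hom(C,k) is represented by the values
of a functional on the basis (dual basis coordinates); the dual basis element e_x^* has
degree - deg x.\<close>

definition koszul :: "int \<Rightarrow> 'k::ring_1" where
  "koszul x = (if even x then 1 else -1)"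

definition homog :: "('i \<Rightarrow> int) \<Rightarrow> int \<Rightarrow> ('i \<Rightarrow> 'k::zero) \<Rightarrow> bool" where
  "homog deg p v \<longleftrightarrow> (\<forall>x. v x \<noteq> 0 \<longrightarrow> deg x = p)"

definition bvec :: "'i \<Rightarrow> 'i \<Rightarrow> 'k::{zero,one}" where
  "bvec x = (\<lambda>y. if y = x then 1 else 0)"

definition bform :: "('i::finite \<Rightarrow> 'i \<Rightarrow> 'k::comm_ring_1) \<Rightarrow> ('i \<Rightarrow> 'k) \<Rightarrow> ('i \<Rightarrow> 'k) \<Rightarrow> 'k" where
  "bform B v w = (\<Sum>x\<in>UNIV. \<Sum>y\<in>UNIV. v x * w y * B x y)"

definition symmetric_form :: "('i::finite \<Rightarrow> int) \<Rightarrow> ('i \<Rightarrow> 'i \<Rightarrow> 'k::comm_ring_1) \<Rightarrow> bool" where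
  "symmetric_form deg B \<longleftrightarrow>
     (\<forall>p q v w. homog deg p v \<longrightarrow> homog deg q w \<longrightarrow>
        bform B v w = koszul (p * q) * bform B w v)"

text \<open>Degree -d: the form pairs degree p with degree d - p.\<close>
definition form_degree :: "('i::finite \<Rightarrow> int) \<Rightarrow> int \<Rightarrow> ('i \<Rightarrow> 'i \<Rightarrow> 'k::comm_ring_1) \<Rightarrow> bool" where
  "form_degree deg d B \<longleftrightarrow>
     (\<forall>p q v w. homog deg p v \<longrightarrow> homog deg q w \<longrightarrow> bform B v w \<noteq> 0 \<longrightarrow> p + q = d)"

definition nondegenerate :: "('i::finite \<Rightarrow> 'i \<Rightarrow> 'k::comm_ring_1) \<Rightarrow> bool" where
  "nondegenerate B \<longleftrightarrow> (\<forall>v. (\<forall>w. bform B v w = 0) \<longrightarrow> v = (\<lambda>_. 0))"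

text \<open>D n x J is the coefficient of e_{J!0} \<otimes> ... \<otimes> e_{J!(n-1)} in \<triangle>_n(e_x).\<close>
definition coprod :: "(nat \<Rightarrow> 'i \<Rightarrow> 'i list \<Rightarrow> 'k::comm_ring_1) \<Rightarrow> nat \<Rightarrow> ('i::finite \<Rightarrow> 'k) \<Rightarrow> 'i list \<Rightarrow> 'k" where
  "coprod D n v = (\<lambda>J. \<Sum>x\<in>UNIV. v x * D n x J)"

text \<open>A-infinity coalgebra: \<triangle>_n has degree n-2 (n \<ge> 1) and the Stasheff relations hold,
  where (id^r \<otimes> \<triangle>_s \<otimes> id^t) carries the Koszul sign (-1)^{(s-2)(|x_1|+...+|x_r|)}.\<close>
definition ainf_coalg :: "('i::finite \<Rightarrow> int) \<Rightarrow> (nat \<Rightarrow> 'i \<Rightarrow> 'i list \<Rightarrow> 'k::comm_ring_1) \<Rightarrow> bool" where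
  "ainf_coalg deg D \<longleftrightarrow>
    (\<forall>n x J. n \<ge> 1 \<longrightarrow> D n x J \<noteq> 0 \<longrightarrow>
        length J = n \<and> sum_list (map deg J) = deg x + int n - 2) \<and>
    (\<forall>n x M. n \<ge> 1 \<longrightarrow> length M = n \<longrightarrow>
       (\<Sum>(r,s,t)\<in>{(r,s,t). r + s + t = n \<and> s \<ge> 1}.
          koszul (int (r + s * t)) * koszul ((int s - 2) * sum_list (map deg (take r M))) *
          (\<Sum>y\<in>UNIV. D (r + 1 + t) x (take r M @ [y] @ drop (r + s) M) * D s y (take s (drop r M))))
        = 0)"

text \<open>Cyclicity of C, read literally in Sweedler notation (a homogeneous).\<close>
definition cyclic_coalg :: "('i::finite \<Rightarrow> int) \<Rightarrow> ('i \<Rightarrow> 'i \<Rightarrow> 'k::comm_ring_1) \<Rightarrow> (nat \<Rightarrow> 'i \<Rightarrow> 'i list \<Rightarrow> 'k) \<Rightarrow> bool" where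
  "cyclic_coalg deg B D \<longleftrightarrow>
    (\<forall>r p a b K. r \<ge> 1 \<longrightarrow> homog deg p a \<longrightarrow> length K = r - 1 \<longrightarrow>
       (\<Sum>m\<in>UNIV. koszul (int r + deg m * (p + int r)) * bform B a (bvec m) * coprod D r b (m # K))
       = (\<Sum>m\<in>UNIV. bform B b (bvec m) * coprod D r a (K @ [m])))"

definition evalT :: "('i \<Rightarrow> 'k::comm_ring_1) list \<Rightarrow> ('i list \<Rightarrow> 'k) \<Rightarrow> 'k" where
  "evalT xs t = (\<Sum>J\<in>{J. length J = length xs}. (\<Prod>a<length xs. (xs ! a) (J ! a)) * t J)"

definition mu :: "(nat \<Rightarrow> 'i \<Rightarrow> 'i list \<Rightarrow> 'k::comm_ring_1) \<Rightarrow> ('i \<Rightarrow> 'k) list \<Rightarrow> ('i \<Rightarrow> 'k)" where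
  "mu D xs = (\<lambda>i. evalT xs (D (length xs) i))"

definition homA :: "('i \<Rightarrow> int) \<Rightarrow> int \<Rightarrow> ('i \<Rightarrow> 'k::zero) \<Rightarrow> bool" where
  "homA deg p \<phi> \<longleftrightarrow> homog (\<lambda>x. - deg x) p \<phi>"

definition star :: "('i::finite \<Rightarrow> 'i \<Rightarrow> 'k::comm_ring_1) \<Rightarrow> ('i \<Rightarrow> 'k) \<Rightarrow> ('i \<Rightarrow> 'k)" where
  "star B a = (\<lambda>x. bform B (bvec x) a)"

definition formA :: "('i::finite \<Rightarrow> 'i \<Rightarrow> 'k::comm_ring_1) \<Rightarrow> ('i \<Rightarrow> 'k) \<Rightarrow> ('i \<Rightarrow> 'k) \<Rightarrow> 'k" where
  "formA B \<phi> \<psi> = bform B (inv (star B) \<phi>) (inv (star B) \<psi>)"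

text \<open>Cyclicity of A: a_1..a_{n-1} = xs (with degrees), a_n = z, a_{n+1} = y.\<close>
definition cyclic_alg :: "('i::finite \<Rightarrow> int) \<Rightarrow> ('i \<Rightarrow> 'i \<Rightarrow> 'k::comm_ring_1) \<Rightarrow> (nat \<Rightarrow> 'i \<Rightarrow> 'i list \<Rightarrow> 'k) \<Rightarrow> bool" where
  "cyclic_alg deg B D \<longleftrightarrow>
    (\<forall>n (xs :: (int \<times> ('i \<Rightarrow> 'k)) list) pz z py y.
       n \<ge> 1 \<longrightarrow> length xs = n - 1 \<longrightarrow> (\<forall>(p, \<phi>)\<in>set xs. homA deg p \<phi>) \<longrightarrow>
       homA deg pz z \<longrightarrow> homA deg py y \<longrightarrow>
       formA B (mu D (map snd xs @ [z])) y
       = koszul (int n + py * (sum_list (map fst xs) + pz)) * formA B (mu D (y # map snd xs)) z)"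

end

theory Submission
  imports Defs "HOL-Analysis.Cartesian_Space"
begin

text \<open>Both cyclicity conditions are multilinear, so each is equivalent to its instance on basis
vectors. For C this instance compares, for basis vectors \<open>e\<^sub>u, e\<^sub>v\<close>, the pairing of
\<open>e\<^sub>u\<close> with the first tensor factor of \<open>\<triangle>\<^sub>r e\<^sub>v\<close> and the pairing of
\<open>e\<^sub>v\<close> with the last tensor factor of \<open>\<triangle>\<^sub>r e\<^sub>u\<close>.
Nondegeneracy makes \<open>a \<mapsto> a\<^sup>*\<close> a linear bijection, so every element of A is some
\<open>a\<^sup>*\<close>; taking \<open>e\<^sub>u\<^sup>*\<close>, \<open>e\<^sub>v\<^sup>*\<close> and dual basis vectors as the
arguments of the cyclicity condition of A and evaluating \<open>\<mu>\<close> gives the same comparison.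
The two signs differ by an even number wherever the compared coefficients are nonzero, because
the form pairs degree p only with degree d - p and \<open>\<triangle>\<^sub>r\<close> has degree r - 2.\<close>

lemma koszul_nonzero: "(koszul a :: 'k::ring_1) \<noteq> 0"
  by (simp add: koszul_def)

lemma koszul_cong: "even a = even b \<Longrightarrow> (koszul a :: 'k::ring_1) = koszul b"
  by (auto simp: koszul_def)

lemma if_zero_mult: "(if P then a else 0) * t = (if P then a * t else (0::'a::mult_zero))"
  by simp

lemma mult_if_zero: "t * (if P then a else 0) = (if P then t * a else (0::'a::mult_zero))"
  by simp

lemma bform_bvec_bvec: "bform B (bvec x) (bvec y) = B x y"
  by (simp add: bform_def bvec_def if_zero_mult mult_if_zero)

lemma bform_bvec_right: "bform B a (bvec m) = (\<Sum>x\<in>UNIV. a x * B x m)"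
  by (simp add: bform_def bvec_def if_zero_mult mult_if_zero)

lemma homog_bvec: "homog deg (deg x) (bvec x :: 'i \<Rightarrow> 'k::zero_neq_one)"
  by (simp add: homog_def bvec_def)

lemma sum_bvec_mult:
  fixes f :: "'i::finite \<Rightarrow> 'k::semiring_1"
  shows "(\<Sum>y\<in>UNIV. bvec x y * f y) = f x"
  by (simp add: bvec_def if_zero_mult)

lemma sum_sum_bvec_mult:
  fixes f :: "'i::finite \<Rightarrow> 'j::finite \<Rightarrow> 'k::semiring_1"
  shows "(\<Sum>x\<in>UNIV. \<Sum>y\<in>UNIV. bvec u x * bvec v y * f x y) = f u v"
proof -
  have "(\<Sum>x\<in>UNIV. \<Sum>y\<in>UNIV. bvec u x * bvec v y * f x y)
      = (\<Sum>x\<in>UNIV. bvec u x * (\<Sum>y\<in>UNIV. bvec v y * f x y))"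
    by (simp add: sum_distrib_left mult.assoc)
  then show ?thesis by (simp add: sum_bvec_mult)
qed

lemma form_degree_gram:
  assumes "form_degree deg d B" "B x y \<noteq> 0"
  shows "deg x + deg y = d"
  using assms unfolding form_degree_def by (metis bform_bvec_bvec homog_bvec)

lemma symmetric_form_gram:
  assumes "symmetric_form deg B"
  shows "B x y = koszul (deg x * deg y) * B y x"
  using assms unfolding symmetric_form_def by (metis bform_bvec_bvec homog_bvec)

lemma gram_swap:
  assumes "form_degree deg d B" "symmetric_form deg (B :: 'i::finite \<Rightarrow> 'i \<Rightarrow> 'k::comm_ring_1)"
  shows "B x y = koszul ((d - deg y) * deg y) * B y x"
proof (cases "B y x = 0")
  case True
  then show ?thesis using symmetric_form_gram[OF assms(2), of x y] by simp
next
  case False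
  then have "deg x = d - deg y" using form_degree_gram[OF assms(1)] by fastforce
  then show ?thesis using symmetric_form_gram[OF assms(2), of x y] by simp
qed

lemma koszul_gram_degree:
  assumes "form_degree deg d B"
  shows "koszul (c + deg m * e) * B x m = koszul (c + (d - deg x) * e) * B x m"
proof (cases "B x m = 0")
  case False
  then have "deg m = d - deg x" using form_degree_gram[OF assms] by fastforce
  then show ?thesis by simp
qed simp

subsection \<open>The isomorphism \<open>a \<mapsto> a\<^sup>*\<close>\<close>

lemma star_apply: "star B a m = (\<Sum>y\<in>UNIV. a y * B m y)"
  unfolding star_def bform_def by (subst sum.swap) (simp add: bvec_def if_zero_mult mult_if_zero)

lemma star_bvec: "star B (bvec v) x = B x v"
  by (simp add: star_apply bvec_def if_zero_mult)

lemma star_apply_swap: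
  assumes "form_degree deg d B" "symmetric_form deg B"
  shows "star B a m = (\<Sum>v\<in>UNIV. a v * koszul ((d - deg v) * deg v) * B v m)"
  unfolding star_apply by (rule sum.cong) (simp_all add: gram_swap[OF assms, of m] mult_ac)

text \<open>Nondegeneracy is a statement about the left kernel, whereas \<open>a\<^sup>*\<close> pairs with a on
the right; twisting by the sign of \<open>gram_swap\<close> passes from one to the other.\<close>

lemma star_eq_zero_imp_zero:
  fixes B :: "'i::finite \<Rightarrow> 'i \<Rightarrow> 'k::field"
  assumes fd: "form_degree deg d B" and sf: "symmetric_form deg B" and nd: "nondegenerate B"
    and zero: "star B v = (\<lambda>_. 0)"
  shows "v = (\<lambda>_. 0)"
proof -
  define w where "w y = v y * koszul ((d - deg y) * deg y)" for y
  have "bform B w u = 0" for u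
  proof -
    have "bform B w u = (\<Sum>y\<in>UNIV. u y * star B v y)"
      unfolding bform_def star_apply_swap[OF fd sf] w_def
      by (subst sum.swap) (simp add: sum_distrib_left mult_ac)
    then show ?thesis using zero by simp
  qed
  then have "w = (\<lambda>_. 0)" using nd by (simp add: nondegenerate_def)
  then show ?thesis by (auto simp: w_def fun_eq_iff koszul_nonzero)
qed

lemma star_inj:
  fixes B :: "'i::finite \<Rightarrow> 'i \<Rightarrow> 'k::field"
  assumes "form_degree deg d B" "symmetric_form deg B" "nondegenerate B"
  shows "inj (star B)"
proof (rule injI)
  fix a b assume "star B a = star B b"
  then have "star B (\<lambda>i. a i - b i) = (\<lambda>_. 0)"
    by (simp add: fun_eq_iff star_apply algebra_simps sum_subtractf)
  then have "(\<lambda>i. a i - b i) = (\<lambda>_. 0)" by (rule star_eq_zero_imp_zero[OF assms])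
  then show "a = b" by (simp add: fun_eq_iff)
qed

text \<open>Surjectivity is the rank argument for the injective linear endomorphism of
\<open>'k ^ 'i\<close> that represents \<open>star B\<close>.\<close>

lemma star_surj:
  fixes B :: "'i::finite \<Rightarrow> 'i \<Rightarrow> 'k::field"
  assumes "form_degree deg d B" "symmetric_form deg B" "nondegenerate B"
  shows "surj (star B)"
proof -
  define g :: "'k^'i \<Rightarrow> 'k^'i" where "g v = vec_lambda (star B (vec_nth v))" for v
  have "Vector_Spaces.linear (*s) (*s) g"
    unfolding Vector_Spaces.linear_iff
  proof (intro conjI allI)
    show "vector_space ((*s) :: 'k \<Rightarrow> 'k^'i \<Rightarrow> 'k^'i)" by unfold_locales
    then show "vector_space ((*s) :: 'k \<Rightarrow> 'k^'i \<Rightarrow> 'k^'i)" .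
    fix x y :: "'k^'i" and c :: 'k
    show "g (x + y) = g x + g y"
      by (simp add: g_def vec_eq_iff star_apply distrib_right sum.distrib)
    show "g (c *s x) = c *s g x"
      by (simp add: g_def vec_eq_iff star_apply sum_distrib_left mult.assoc)
  qed
  moreover have "inj g"
  proof (rule injI)
    fix x y assume "g x = g y"
    then have "star B (vec_nth x) = star B (vec_nth y)"
      unfolding g_def by (metis vec_lambda_inverse UNIV_I)
    then show "x = y" using star_inj[OF assms] by (simp add: inj_eq vec_nth_inject)
  qed
  ultimately have "surj g" using vec.linear_inj_imp_surj by blast
  show ?thesis
  proof (rule surjI)
    fix F :: "'i \<Rightarrow> 'k"
    obtain v where "g v = vec_lambda F" using \<open>surj g\<close> by (metis surjD)
    then have "star B (vec_nth v) = F" unfolding g_def by (metis vec_lambda_inverse UNIV_I)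
    then show "star B (vec_nth (SOME v. star B (vec_nth v) = F)) = F"
      by (metis (mono_tags) someI_ex)
  qed
qed

lemma formA_star_right:
  fixes B :: "'i::finite \<Rightarrow> 'i \<Rightarrow> 'k::field"
  assumes fd: "form_degree deg d B" and sf: "symmetric_form deg B" and nd: "nondegenerate B"
  shows "formA B F (star B b) = (\<Sum>y\<in>UNIV. b y * koszul ((d - deg y) * deg y) * F y)"
proof -
  obtain c where c: "star B c = F" using star_surj[OF fd sf nd] by (metis surjD)
  have "inv (star B) F = c" "inv (star B) (star B b) = b"
    using c star_inj[OF fd sf nd] by (auto simp: inv_f_f)
  then have "formA B F (star B b) = (\<Sum>x\<in>UNIV. \<Sum>y\<in>UNIV. c x * b y * B x y)"
    by (simp add: formA_def bform_def)
  also have "\<dots> = (\<Sum>x\<in>UNIV. \<Sum>y\<in>UNIV. b y * koszul ((d - deg y) * deg y) * (c x * B y x))"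
  proof (intro sum.cong refl)
    fix x y
    show "c x * b y * B x y = b y * koszul ((d - deg y) * deg y) * (c x * B y x)"
      using gram_swap[OF fd sf, of x y] by (simp add: mult_ac)
  qed
  also have "\<dots> = (\<Sum>y\<in>UNIV. b y * koszul ((d - deg y) * deg y) * star B c y)"
    by (subst sum.swap) (simp add: star_apply sum_distrib_left mult_ac)
  finally show ?thesis using c by simp
qed

lemma homA_star_imp_homog:
  fixes B :: "'i::finite \<Rightarrow> 'i \<Rightarrow> 'k::field"
  assumes fd: "form_degree deg d B" and sf: "symmetric_form deg B" and nd: "nondegenerate B"
    and hom: "homA deg p (star B a)"
  shows "homog deg (p + d) a"
proof -
  define a' where "a' y = (if deg y = p + d then a y else 0)" for y
  have "star B a' x = star B a x" for x
  proof (cases "- deg x = p")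
    case True
    then show ?thesis
      unfolding star_apply a'_def
      by (intro sum.cong refl) (use form_degree_gram[OF fd, of x] in fastforce)
  next
    case False
    then have "star B a x = 0" using hom by (auto simp: homA_def homog_def)
    moreover have "star B a' x = 0"
      unfolding star_apply a'_def
      by (intro sum.neutral ballI) (use form_degree_gram[OF fd, of x] False in fastforce)
    ultimately show ?thesis by simp
  qed
  then have "star B a' = star B a" by (rule ext)
  then have "a' = a" using star_inj[OF fd sf nd] by (simp add: inj_eq)
  then show ?thesis unfolding homog_def by (metis a'_def)
qed

lemma homA_star_bvec:
  assumes "form_degree deg d B"
  shows "homA deg (deg v - d) (star B (bvec v))"
  unfolding homA_def homog_def
proof (intro allI impI)
  fix x assume "star B (bvec v) x \<noteq> 0"
  then have "B x v \<noteq> 0" by (simp add: star_bvec)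
  then show "- deg x = deg v - d" using form_degree_gram[OF assms] by fastforce
qed

subsection \<open>Evaluating tensors on the dual basis\<close>

definition evalT_basis :: "('i \<Rightarrow> 'k::comm_ring_1) list \<Rightarrow> 'i list \<Rightarrow> 'k" where
  "evalT_basis xs K = (\<Prod>a<length xs. (xs!a) (K!a))"

lemma evalT_basis_Nil: "evalT_basis [] K = 1" by (simp add: evalT_basis_def)

lemma evalT_basis_Cons: "evalT_basis (f # fs) (k # K) = f k * evalT_basis fs K"
  unfolding evalT_basis_def by (simp only: length_Cons prod.lessThan_Suc_shift) simp

lemma evalT_basis_nonzero_degree:
  assumes "\<forall>(p,\<phi>)\<in>set xs. homA deg p \<phi>" "length K = length xs"
    and "evalT_basis (map snd xs) K \<noteq> (0::'k::comm_ring_1)"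
  shows "sum_list (map deg K) = - sum_list (map fst xs)"
  using assms
proof (induction xs arbitrary: K)
  case Nil then show ?case by simp
next
  case (Cons x xs)
  then obtain k K' where K: "K = k # K'" by (cases K) auto
  obtain p \<phi> where x: "x = (p, \<phi>)" by (cases x)
  from Cons.prems K x have nz: "\<phi> k \<noteq> 0" "evalT_basis (map snd xs) K' \<noteq> 0"
    by (auto simp: evalT_basis_Cons)
  from Cons.prems x have "homA deg p \<phi>" by auto
  then have "- deg k = p" using nz(1) by (auto simp: homA_def homog_def)
  moreover have "sum_list (map deg K') = - sum_list (map fst xs)"
    using Cons.IH[of K'] Cons.prems K nz(2) by auto
  ultimately show ?case using K x by simp
qed

lemma evalT_basis_bvec:
  "length K' = length K \<Longrightarrow>
    evalT_basis (map bvec K) K' = (if K' = K then 1 else (0::'k::comm_ring_1))"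
proof (induction K arbitrary: K')
  case Nil then show ?case by (simp add: evalT_basis_Nil)
next
  case (Cons k K)
  then obtain k' K'' where "K' = k' # K''" by (cases K') auto
  with Cons show ?case by (auto simp: evalT_basis_Cons bvec_def)
qed

lemma lists_length_Suc_snoc:
  "{J :: 'i list. length J = Suc l} = (\<lambda>(K,m). K @ [m]) ` ({K. length K = l} \<times> UNIV)"
proof (rule set_eqI, rule iffI)
  fix J :: "'i list" assume "J \<in> {J. length J = Suc l}"
  then have "J = butlast J @ [last J]" "length (butlast J) = l"
    by (auto intro!: append_butlast_last_id[symmetric])
  then show "J \<in> (\<lambda>(K,m). K @ [m]) ` ({K. length K = l} \<times> UNIV)"
    by (metis (mono_tags, lifting) UNIV_I case_prod_conv image_eqI mem_Collect_eq mem_Sigma_iff)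
qed auto

lemma lists_length_Suc_Cons:
  "{J :: 'i list. length J = Suc l} = (\<lambda>(K,m). m # K) ` ({K. length K = l} \<times> UNIV)"
proof (rule set_eqI, rule iffI)
  fix J :: "'i list" assume "J \<in> {J. length J = Suc l}"
  then obtain m K where "J = m # K" "length K = l" by (cases J) auto
  then show "J \<in> (\<lambda>(K,m). m # K) ` ({K. length K = l} \<times> UNIV)" by force
qed auto

lemma evalT_snoc:
  fixes xs :: "('i \<Rightarrow> 'k::comm_ring_1) list"
  shows
  "evalT (xs @ [z]) t = (\<Sum>K\<in>{K. length K = length xs}. \<Sum>m\<in>UNIV. evalT_basis xs K * z m * t (K @ [m]))"
proof -
  have inj: "inj_on (\<lambda>(K,m). K @ [m]) ({K. length K = length xs} \<times> (UNIV :: 'i set))"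
    by (auto simp: inj_on_def)
  have pr: "(\<Prod>a<Suc (length xs). ((xs @ [z]) ! a) ((K @ [m]) ! a)) = evalT_basis xs K * z m"
    if "length K = length xs" for K m
  proof -
    have "(\<Prod>a<length xs. ((xs @ [z]) ! a) ((K @ [m]) ! a)) = evalT_basis xs K"
      unfolding evalT_basis_def by (rule prod.cong) (auto simp: nth_append that)
    then show ?thesis using that by (simp add: nth_append)
  qed
  have "evalT (xs @ [z]) t = (\<Sum>J\<in>(\<lambda>(K,m). K @ [m]) ` ({K. length K = length xs} \<times> UNIV).
          (\<Prod>a<Suc (length xs). ((xs @ [z]) ! a) (J ! a)) * t J)"
    unfolding evalT_def by (simp add: lists_length_Suc_snoc[symmetric])
  also have "\<dots> = (\<Sum>(K,m)\<in>{K. length K = length xs} \<times> UNIV. evalT_basis xs K * z m * t (K @ [m]))"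
    by (subst sum.reindex[OF inj]) (auto intro!: sum.cong simp: pr simp del: prod.lessThan_Suc)
  also have "\<dots> = (\<Sum>K\<in>{K. length K = length xs}. \<Sum>m\<in>UNIV. evalT_basis xs K * z m * t (K @ [m]))"
    by (subst sum.cartesian_product) simp
  finally show ?thesis .
qed

lemma evalT_Cons:
  fixes xs :: "('i \<Rightarrow> 'k::comm_ring_1) list"
  shows
  "evalT (z # xs) t = (\<Sum>K\<in>{K. length K = length xs}. \<Sum>m\<in>UNIV. z m * evalT_basis xs K * t (m # K))"
proof -
  have inj: "inj_on (\<lambda>(K,m). m # K) ({K. length K = length xs} \<times> (UNIV :: 'i set))"
    by (auto simp: inj_on_def)
  have pr: "(\<Prod>a<Suc (length xs). ((z # xs) ! a) ((m # K) ! a)) = z m * evalT_basis xs K"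
    if "length K = length xs" for K m
    unfolding evalT_basis_def by (simp only: prod.lessThan_Suc_shift) simp
  have "evalT (z # xs) t = (\<Sum>J\<in>(\<lambda>(K,m). m # K) ` ({K. length K = length xs} \<times> UNIV).
          (\<Prod>a<Suc (length xs). ((z # xs) ! a) (J ! a)) * t J)"
    unfolding evalT_def by (simp add: lists_length_Suc_Cons[symmetric])
  also have "\<dots> = (\<Sum>(K,m)\<in>{K. length K = length xs} \<times> UNIV. z m * evalT_basis xs K * t (m # K))"
    by (subst sum.reindex[OF inj]) (auto intro!: sum.cong simp: pr simp del: prod.lessThan_Suc)
  also have "\<dots> = (\<Sum>K\<in>{K. length K = length xs}. \<Sum>m\<in>UNIV. z m * evalT_basis xs K * t (m # K))"
    by (subst sum.cartesian_product) simp
  finally show ?thesis .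
qed

lemma finite_lists_length: "finite {K :: 'i::finite list. length K = n}"
  using finite_lists_length_eq[of "UNIV :: 'i set" n] by simp

subsection \<open>Cyclicity on basis vectors\<close>

text \<open>\<open>contract_first B D u v K\<close> is the coefficient of
\<open>e\<^sub>K\<close> in \<open>\<langle>a, b\<^sup>1\<rangle> b\<^sup>2\<cdots>b\<^sup>r\<close> and
\<open>contract_last B D v u K\<close> that in \<open>\<langle>b, a\<^sup>r\<rangle> a\<^sup>1\<cdots>a\<^sup>r\<^sup>-\<^sup>1\<close>,
for \<open>a = e\<^sub>u\<close> and \<open>b = e\<^sub>v\<close>.\<close>

definition contract_last ::
    "('i \<Rightarrow> 'i \<Rightarrow> 'k::comm_ring_1) \<Rightarrow> (nat \<Rightarrow> 'i \<Rightarrow> 'i list \<Rightarrow> 'k)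
      \<Rightarrow> 'i \<Rightarrow> 'i \<Rightarrow> 'i list \<Rightarrow> 'k" where
  "contract_last B D w x K = (\<Sum>m\<in>UNIV. B w m * D (Suc (length K)) x (K @ [m]))"

definition contract_first ::
    "('i \<Rightarrow> 'i \<Rightarrow> 'k::comm_ring_1) \<Rightarrow> (nat \<Rightarrow> 'i \<Rightarrow> 'i list \<Rightarrow> 'k)
      \<Rightarrow> 'i \<Rightarrow> 'i \<Rightarrow> 'i list \<Rightarrow> 'k" where
  "contract_first B D w x K = (\<Sum>m\<in>UNIV. B w m * D (Suc (length K)) x (m # K))"

definition cyclic_on_basis :: "('i::finite \<Rightarrow> int) \<Rightarrow> int \<Rightarrow> ('i \<Rightarrow> 'i \<Rightarrow> 'k::comm_ring_1)
    \<Rightarrow> (nat \<Rightarrow> 'i \<Rightarrow> 'i list \<Rightarrow> 'k) \<Rightarrow> bool" where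
  "cyclic_on_basis deg d B D \<longleftrightarrow> (\<forall>K u v. contract_last B D v u K =
     koszul (int (Suc (length K)) + (d - deg u) * (deg u + int (Suc (length K))))
     * contract_first B D u v K)"

lemma cyclic_signs_agree:
  fixes B :: "'i::finite \<Rightarrow> 'i \<Rightarrow> 'k::comm_ring_1"
  assumes fd: "form_degree deg d B" and ac: "ainf_coalg deg D"
    and nonzero: "contract_first B D u v K \<noteq> 0"
  shows "(koszul (int (Suc (length K)) + (d - deg u) * (deg u + int (Suc (length K)))) :: 'k)
       = koszul (int (Suc (length K)) + (deg u - d) * (deg v - d - sum_list (map deg K)))"
proof -
  obtain m where m1: "B u m \<noteq> 0" and m2: "D (Suc (length K)) v (m # K) \<noteq> 0"
    using nonzero unfolding contract_first_def
    by (metis (no_types, lifting) mult_zero_left mult_zero_right sum.neutral)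
  have e1: "deg u + deg m = d" using form_degree_gram[OF fd m1] .
  have e2: "deg m + sum_list (map deg K) = deg v + int (Suc (length K)) - 2"
    using m2 ac unfolding ainf_coalg_def by fastforce
  define n where "n = int (Suc (length K))"
  have e3: "sum_list (map deg K) = deg v + n - 2 - d + deg u" using e1 e2 unfolding n_def by simp
  have "(deg u - d) * (deg v - d - sum_list (map deg K))
      = (d - deg u) * (deg u + n) - 2 * (d - deg u)"
    unfolding e3 by (simp add: algebra_simps)
  moreover have "even (a + x) = even (a + (x - 2 * c))" for a x c :: int by presburger
  ultimately show ?thesis unfolding n_def[symmetric] by (intro koszul_cong) simp
qed

lemma cyclic_on_basis_iff_dual_sign:
  fixes B :: "'i::finite \<Rightarrow> 'i \<Rightarrow> 'k::comm_ring_1"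
  assumes fd: "form_degree deg d B" and ac: "ainf_coalg deg D"
  shows "cyclic_on_basis deg d B D \<longleftrightarrow>
    (\<forall>K u v. contract_last B D v u K =
       koszul (int (Suc (length K)) + (deg u - d) * (deg v - d - sum_list (map deg K)))
       * contract_first B D u v K)"
proof -
  have sign_eq: "koszul (int (Suc (length K)) + (d - deg u) * (deg u + int (Suc (length K))))
          * contract_first B D u v K
      = koszul (int (Suc (length K)) + (deg u - d) * (deg v - d - sum_list (map deg K)))
          * contract_first B D u v K" for K u v
  proof (cases "contract_first B D u v K = 0")
    case False
    then show ?thesis using cyclic_signs_agree[OF fd ac False] by simp
  qed simp
  then show ?thesis unfolding cyclic_on_basis_def by (simp only: sign_eq)
qed

subsection \<open>The coalgebra side\<close>

lemma cyclic_coalg_lhs_eq: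
  fixes B :: "'i::finite \<Rightarrow> 'i \<Rightarrow> 'k::comm_ring_1"
  assumes fd: "form_degree deg d B" and ha: "homog deg p a" and r: "r = Suc (length K)"
  shows "(\<Sum>m\<in>UNIV. koszul (int r + deg m * (p + int r)) * bform B a (bvec m) * coprod D r b (m # K))
     = (\<Sum>x\<in>UNIV. \<Sum>y\<in>UNIV.
          a x * b y * (koszul (int r + (d - deg x) * (deg x + int r)) * contract_first B D x y K))"
proof -
  have "(\<Sum>m\<in>UNIV. koszul (int r + deg m * (p + int r)) * bform B a (bvec m) * coprod D r b (m # K))
     = (\<Sum>m\<in>UNIV. \<Sum>x\<in>UNIV. \<Sum>y\<in>UNIV.
          a x * b y * (koszul (int r + deg m * (p + int r)) * B x m * D r y (m # K)))"
    by (simp add: bform_bvec_right coprod_def sum_distrib_left sum_distrib_right mult_ac)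
  also have "\<dots> = (\<Sum>x\<in>UNIV. \<Sum>y\<in>UNIV. \<Sum>m\<in>UNIV.
          a x * b y * (koszul (int r + deg m * (p + int r)) * B x m * D r y (m # K)))"
    by (subst sum.swap, rule sum.cong[OF refl], subst sum.swap, rule refl)
  also have "\<dots> = (\<Sum>x\<in>UNIV. \<Sum>y\<in>UNIV.
          a x * b y * (koszul (int r + (d - deg x) * (deg x + int r)) * contract_first B D x y K))"
  proof (intro sum.cong refl)
    fix x y
    show "(\<Sum>m\<in>UNIV. a x * b y * (koszul (int r + deg m * (p + int r)) * B x m * D r y (m # K)))
      = a x * b y * (koszul (int r + (d - deg x) * (deg x + int r)) * contract_first B D x y K)"
    proof (cases "a x = 0")
      case False
      then have "deg x = p" using ha by (auto simp: homog_def)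
      then show ?thesis
        unfolding contract_first_def r[symmetric] sum_distrib_left
        by (intro sum.cong refl) (simp add: koszul_gram_degree[OF fd] mult.assoc)
    qed simp
  qed
  finally show ?thesis .
qed

lemma cyclic_coalg_rhs_eq:
  fixes B :: "'i::finite \<Rightarrow> 'i \<Rightarrow> 'k::comm_ring_1"
  assumes r: "r = Suc (length K)"
  shows "(\<Sum>m\<in>UNIV. bform B b (bvec m) * coprod D r a (K @ [m]))
     = (\<Sum>x\<in>UNIV. \<Sum>y\<in>UNIV. a x * b y * contract_last B D y x K)"
proof -
  have "(\<Sum>m\<in>UNIV. bform B b (bvec m) * coprod D r a (K @ [m]))
     = (\<Sum>m\<in>UNIV. \<Sum>x\<in>UNIV. \<Sum>y\<in>UNIV. a x * b y * (B y m * D r x (K @ [m])))"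
    by (simp add: bform_bvec_right coprod_def sum_distrib_left sum_distrib_right mult_ac)
  also have "\<dots> = (\<Sum>x\<in>UNIV. \<Sum>y\<in>UNIV. \<Sum>m\<in>UNIV. a x * b y * (B y m * D r x (K @ [m])))"
    by (subst sum.swap, rule sum.cong[OF refl], subst sum.swap, rule refl)
  also have "\<dots> = (\<Sum>x\<in>UNIV. \<Sum>y\<in>UNIV. a x * b y * contract_last B D y x K)"
    by (simp add: contract_last_def r sum_distrib_left)
  finally show ?thesis .
qed

lemma cyclic_coalg_iff_basis:
  fixes B :: "'i::finite \<Rightarrow> 'i \<Rightarrow> 'k::comm_ring_1"
  assumes fd: "form_degree deg d B"
  shows "cyclic_coalg deg B D \<longleftrightarrow> cyclic_on_basis deg d B D"
proof
  assume cc: "cyclic_coalg deg B D"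
  show "cyclic_on_basis deg d B D" unfolding cyclic_on_basis_def
  proof (intro allI)
    fix K :: "'i list" and u v
    define r where "r = Suc (length K)"
    have "(\<Sum>m\<in>UNIV. koszul (int r + deg m * (deg u + int r)) * bform B (bvec u) (bvec m)
            * coprod D r (bvec v) (m # K))
       = (\<Sum>m\<in>UNIV. bform B (bvec v) (bvec m) * coprod D r (bvec u) (K @ [m]))"
      by (rule cc[unfolded cyclic_coalg_def, rule_format]) (simp_all add: r_def homog_bvec)
    then show "contract_last B D v u K =
        koszul (int (Suc (length K)) + (d - deg u) * (deg u + int (Suc (length K))))
        * contract_first B D u v K"
      unfolding cyclic_coalg_lhs_eq[OF fd homog_bvec r_def] cyclic_coalg_rhs_eq[OF r_def]
      by (simp add: sum_sum_bvec_mult r_def)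
  qed
next
  assume cb: "cyclic_on_basis deg d B D"
  show "cyclic_coalg deg B D" unfolding cyclic_coalg_def
  proof (intro allI impI)
    fix r :: nat and p :: int and a b :: "'i \<Rightarrow> 'k" and K :: "'i list"
    assume "1 \<le> r" and ha: "homog deg p a" and "length K = r - 1"
    then have r: "r = Suc (length K)" by simp
    show "(\<Sum>m\<in>UNIV. koszul (int r + deg m * (p + int r)) * bform B a (bvec m) * coprod D r b (m # K))
       = (\<Sum>m\<in>UNIV. bform B b (bvec m) * coprod D r a (K @ [m]))"
      unfolding cyclic_coalg_lhs_eq[OF fd ha r] cyclic_coalg_rhs_eq[OF r]
      using cb unfolding cyclic_on_basis_def r by simp
  qed
qed

subsection \<open>The algebra side\<close>

lemma mu_snoc_star:
  fixes B :: "'i::finite \<Rightarrow> 'i \<Rightarrow> 'k::comm_ring_1"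
  assumes fd: "form_degree deg d B" and sf: "symmetric_form deg B"
  shows "mu D (xs @ [star B a]) u =
    (\<Sum>v\<in>UNIV. \<Sum>K\<in>{K. length K = length xs}.
       a v * koszul ((d - deg v) * deg v) * evalT_basis xs K * contract_last B D v u K)"
proof -
  have "mu D (xs @ [star B a]) u =
     (\<Sum>K\<in>{K. length K = length xs}. \<Sum>m\<in>UNIV.
        evalT_basis xs K * star B a m * D (Suc (length xs)) u (K @ [m]))"
    unfolding mu_def by (simp add: evalT_snoc)
  also have "\<dots> = (\<Sum>K\<in>{K. length K = length xs}. \<Sum>m\<in>UNIV. \<Sum>v\<in>UNIV.
        a v * koszul ((d - deg v) * deg v) * evalT_basis xs K
        * (B v m * D (Suc (length xs)) u (K @ [m])))"
    by (simp add: star_apply_swap[OF fd sf] sum_distrib_left sum_distrib_right mult_ac)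
  also have "\<dots> = (\<Sum>K\<in>{K. length K = length xs}. \<Sum>v\<in>UNIV.
        a v * koszul ((d - deg v) * deg v) * evalT_basis xs K * contract_last B D v u K)"
    by (rule sum.cong[OF refl], subst sum.swap, simp add: contract_last_def sum_distrib_left mult_ac)
  finally show ?thesis by (subst sum.swap)
qed

lemma mu_Cons_star:
  fixes B :: "'i::finite \<Rightarrow> 'i \<Rightarrow> 'k::comm_ring_1"
  assumes fd: "form_degree deg d B" and sf: "symmetric_form deg B"
  shows "mu D (star B b # xs) v =
    (\<Sum>u\<in>UNIV. \<Sum>K\<in>{K. length K = length xs}.
       b u * koszul ((d - deg u) * deg u) * evalT_basis xs K * contract_first B D u v K)"
proof -
  have "mu D (star B b # xs) v =
     (\<Sum>K\<in>{K. length K = length xs}. \<Sum>m\<in>UNIV.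
        star B b m * evalT_basis xs K * D (Suc (length xs)) v (m # K))"
    unfolding mu_def by (simp add: evalT_Cons)
  also have "\<dots> = (\<Sum>K\<in>{K. length K = length xs}. \<Sum>m\<in>UNIV. \<Sum>u\<in>UNIV.
        b u * koszul ((d - deg u) * deg u) * evalT_basis xs K
        * (B u m * D (Suc (length xs)) v (m # K)))"
    by (simp add: star_apply_swap[OF fd sf] sum_distrib_left sum_distrib_right mult_ac)
  also have "\<dots> = (\<Sum>K\<in>{K. length K = length xs}. \<Sum>u\<in>UNIV.
        b u * koszul ((d - deg u) * deg u) * evalT_basis xs K * contract_first B D u v K)"
    by (rule sum.cong[OF refl], subst sum.swap, simp add: contract_first_def sum_distrib_left mult_ac)
  finally show ?thesis by (subst sum.swap)
qed

lemma formA_mu_snoc_star: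
  fixes B :: "'i::finite \<Rightarrow> 'i \<Rightarrow> 'k::field"
  assumes fd: "form_degree deg d B" and sf: "symmetric_form deg B" and nd: "nondegenerate B"
  shows "formA B (mu D (xs @ [star B a])) (star B b) =
    (\<Sum>u\<in>UNIV. \<Sum>v\<in>UNIV. \<Sum>K\<in>{K. length K = length xs}.
       (b u * koszul ((d - deg u) * deg u) * (a v * koszul ((d - deg v) * deg v) * evalT_basis xs K))
       * contract_last B D v u K)"
  unfolding formA_star_right[OF fd sf nd] mu_snoc_star[OF fd sf]
  by (simp add: sum_distrib_left mult_ac)

lemma formA_mu_Cons_star:
  fixes B :: "'i::finite \<Rightarrow> 'i \<Rightarrow> 'k::field"
  assumes fd: "form_degree deg d B" and sf: "symmetric_form deg B" and nd: "nondegenerate B"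
  shows "formA B (mu D (star B b # xs)) (star B a) =
    (\<Sum>u\<in>UNIV. \<Sum>v\<in>UNIV. \<Sum>K\<in>{K. length K = length xs}.
       (b u * koszul ((d - deg u) * deg u) * (a v * koszul ((d - deg v) * deg v) * evalT_basis xs K))
       * contract_first B D u v K)"
  unfolding formA_star_right[OF fd sf nd] mu_Cons_star[OF fd sf]
  by (subst sum.swap) (simp add: sum_distrib_left mult_ac)

lemma sum_bvec_evalT_basis:
  fixes K :: "'i::finite list" and u v :: 'i
  shows
  "(\<Sum>u'\<in>UNIV. \<Sum>v'\<in>UNIV. \<Sum>K'\<in>{K'. length K' = length K}.
     (bvec u u' * f u' * (bvec v v' * g v' * evalT_basis (map bvec K) K')) * h u' v' K')
   = f u * g v * (h u v K :: 'k::comm_ring_1)"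
proof -
  have "(\<Sum>K'\<in>{K'. length K' = length K}.
          (bvec u u' * f u' * (bvec v v' * g v' * evalT_basis (map bvec K) K')) * h u' v' K')
      = bvec u u' * bvec v v' * (f u' * g v' * h u' v' K)" for u' v'
  proof -
    have "(\<Sum>K'\<in>{K'. length K' = length K}.
          (bvec u u' * f u' * (bvec v v' * g v' * evalT_basis (map bvec K) K')) * h u' v' K')
       = (\<Sum>K'\<in>{K'. length K' = length K}.
          if K' = K then bvec u u' * bvec v v' * (f u' * g v' * h u' v' K) else 0)"
      by (rule sum.cong) (auto simp: evalT_basis_bvec mult_ac)
    then show ?thesis by (simp add: finite_lists_length)
  qed
  then show ?thesis by (simp add: sum_sum_bvec_mult)
qed

lemma cyclic_alg_imp_basis:
  fixes B :: "'i::finite \<Rightarrow> 'i \<Rightarrow> 'k::field"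
  assumes fd: "form_degree deg d B" and sf: "symmetric_form deg B" and nd: "nondegenerate B"
    and ac: "ainf_coalg deg D" and ca: "cyclic_alg deg B D"
  shows "cyclic_on_basis deg d B D"
  unfolding cyclic_on_basis_iff_dual_sign[OF fd ac]
proof (intro allI)
  fix K :: "'i list" and u v
  define xs where "xs = map (\<lambda>k. (- deg k, bvec k :: 'i \<Rightarrow> 'k)) K"
  define su where "su = (koszul ((d - deg u) * deg u) :: 'k)"
  define sv where "sv = (koszul ((d - deg v) * deg v) :: 'k)"
  define sg where "sg = (koszul (int (Suc (length K))
                     + (deg u - d) * (sum_list (map fst xs) + (deg v - d))) :: 'k)"
  have hx: "\<forall>(p, \<phi>)\<in>set xs. homA deg p \<phi>"
    by (auto simp: xs_def homA_def homog_def bvec_def)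
  have "formA B (mu D (map snd xs @ [star B (bvec v)])) (star B (bvec u))
      = sg * formA B (mu D (star B (bvec u) # map snd xs)) (star B (bvec v))"
    unfolding sg_def
    by (rule ca[unfolded cyclic_alg_def, rule_format])
      (simp_all add: hx homA_star_bvec[OF fd] xs_def)
  moreover have "map snd xs = map bvec K" by (simp add: xs_def)
  ultimately have "su * sv * contract_last B D v u K = sg * (su * sv * contract_first B D u v K)"
    unfolding formA_mu_snoc_star[OF fd sf nd] formA_mu_Cons_star[OF fd sf nd]
    by (simp only: sum_bvec_evalT_basis length_map su_def sv_def)
  moreover have "su * sv \<noteq> 0" by (simp add: su_def sv_def koszul_nonzero)
  moreover have "sum_list (map fst xs) = - sum_list (map deg K)"
    by (simp add: xs_def o_def uminus_sum_list_map)
  ultimately show "contract_last B D v u K =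
      koszul (int (Suc (length K)) + (deg u - d) * (deg v - d - sum_list (map deg K)))
      * contract_first B D u v K"
    unfolding sg_def by (simp add: algebra_simps)
qed

lemma cyclic_on_basis_imp_alg:
  fixes B :: "'i::finite \<Rightarrow> 'i \<Rightarrow> 'k::field"
  assumes fd: "form_degree deg d B" and sf: "symmetric_form deg B" and nd: "nondegenerate B"
    and ac: "ainf_coalg deg D" and cb: "cyclic_on_basis deg d B D"
  shows "cyclic_alg deg B D"
  unfolding cyclic_alg_def
proof (intro allI impI)
  fix n :: nat and xs :: "(int \<times> ('i \<Rightarrow> 'k)) list"
    and pz py :: int and z y :: "'i \<Rightarrow> 'k"
  assume "1 \<le> n" "length xs = n - 1" and hx: "\<forall>(p, \<phi>)\<in>set xs. homA deg p \<phi>"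
    and hz: "homA deg pz z" and hy: "homA deg py y"
  then have n: "n = Suc (length xs)" by simp
  obtain a b where za: "z = star B a" and yb: "y = star B b"
    using star_surj[OF fd sf nd] by (metis surjD)
  have ha: "homog deg (pz + d) a" and hb: "homog deg (py + d) b"
    using homA_star_imp_homog[OF fd sf nd] hz hy za yb by blast+
  define sg where "sg = (koszul (int n + py * (sum_list (map fst xs) + pz)) :: 'k)"
  have "formA B (mu D (map snd xs @ [z])) y = sg * formA B (mu D (y # map snd xs)) z"
    unfolding za yb formA_mu_snoc_star[OF fd sf nd] formA_mu_Cons_star[OF fd sf nd] sum_distrib_left
  proof (intro sum.cong refl)
    fix u v :: 'i and K :: "'i list"
    assume K: "K \<in> {K. length K = length (map snd xs)}"
    let ?T = "b u * koszul ((d - deg u) * deg u)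
              * (a v * koszul ((d - deg v) * deg v) * evalT_basis (map snd xs) K)"
    show "?T * contract_last B D v u K = sg * (?T * contract_first B D u v K)"
    proof (cases "?T = 0")
      case True
      then show ?thesis by (simp only: True mult_zero_left mult_zero_right)
    next
      case False
      then have "b u \<noteq> 0" "a v \<noteq> 0" "evalT_basis (map snd xs) K \<noteq> 0" by auto
      then have "deg u = py + d" "deg v = pz + d"
        and "sum_list (map deg K) = - sum_list (map fst xs)"
        using ha hb evalT_basis_nonzero_degree[OF hx] K by (auto simp: homog_def)
      then have "sg = koszul (int (Suc (length K))
                   + (deg u - d) * (deg v - d - sum_list (map deg K)))"
        using K unfolding sg_def n by (simp add: algebra_simps)
      then show ?thesis
        using cb unfolding cyclic_on_basis_iff_dual_sign[OF fd ac] by (simp add: mult_ac)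
    qed
  qed
  then show "formA B (mu D (map snd xs @ [z])) y =
      koszul (int n + py * (sum_list (map fst xs) + pz)) * formA B (mu D (y # map snd xs)) z"
    unfolding sg_def .
qed

theorem lemma4p2:
  fixes deg :: "'i::finite \<Rightarrow> int" and d :: int
    and B :: "'i \<Rightarrow> 'i \<Rightarrow> 'k::field"
    and D :: "nat \<Rightarrow> 'i \<Rightarrow> 'i list \<Rightarrow> 'k"
  assumes "ainf_coalg deg D"
    and "symmetric_form deg B"
    and "form_degree deg d B"
    and "nondegenerate B"
  shows "cyclic_coalg deg B D \<longleftrightarrow> cyclic_alg deg B D"
  using cyclic_coalg_iff_basis[OF assms(3)] cyclic_alg_imp_basis[OF assms(3,2,4,1)]
    cyclic_on_basis_imp_alg[OF assms(3,2,4,1)] by blast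

end
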